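(* Let $A$ be a band operator on $\ell^2(\mathbb{Z})$ satisfying $\mathcal{C}(A)=\mathcal{C}(A|_{\mathbb{N}})$. Then (a) $A$ is self-contained; (b) $\mathcal{C}(A^* )=\mathcal{C}(A^*|_{\mathbb{N}})$; (c) $\mathcal{C}(A)=\mathcal{C}(A|_{k..})$ for all $k\in\mathbb{Z}$. Moreover, (d) a band operator $B$ on $\ell^2(\mathbb{Z})$ is self-contained if and only if $\mathcal{C}(B)=\mathcal{C}(B|_{\mathbb{N}})\cup\mathcal{C}(B|_{-\mathbb{N}})$.
   Context: $\mathbb{N}=\{1,2,\dots\}$, $k..:=\{n\in\mathbb{Z}:n\ge k\}$, $a..b:=\{n\in\mathbb{Z}:a\le n\le b\}$. A band operator with band-width $w$ on $\ell^2(\mathbb{Z})$ is a bounded operator whose matrix satisfies $A_{ij}=0$ for $|i-j|>w$. For $\mathbb{J}\subseteq\mathbb{Z}$, $A|_{\mathbb{J}}:\ell^2(\mathbb{J})\to\ell^2(\mathbb{Z})$ is the restriction, with matrix $(A_{ij})_{i\in\mathbb{Z},j\in\mathbb{J}}$. For $N\in\mathbb{N}$, an $N$-column submatrix of an operator $B$ (with column index set $\mathbb{J}$) is a matrix $C=(C_{ij})_{i\in1-w..N+w,\,j\in1..N}$ with $C_{ij}=B_{k+i,k+j}$ for some $k$ with $k+1..k+N\subseteq\mathbb{J}$; $\mathcal{C}(B)$ is the set of all such matrices over all $N$. $A$ is self-contained if every $C\in\mathcal{C}(A)$ appears infinitely often in $A$, i.e. for infinitely many $k\in\mathbb{Z}$.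 *)

theory Defs
  imports Complex_Main
begin

text \<open>Bi-infinite matrices over the integers, identified with operators on l2(Z)
  (acting on finitely supported vectors, which are dense).\<close>
type_synonym zmat = "int \<Rightarrow> int \<Rightarrow> complex"

text \<open>Boundedness on l2(Z): the operator norm estimate on all finitely supported
  vectors (supported in a finite set F), measured on arbitrary finite row sets I.\<close>
definition bounded_op :: "zmat \<Rightarrow> bool" where
  "bounded_op A \<longleftrightarrow> (\<exists>C\<ge>0. \<forall>(x::int \<Rightarrow> complex) F I. finite F \<longrightarrow> finite I \<longrightarrow>
      (\<Sum>i\<in>I. (cmod (\<Sum>j\<in>F. A i j * x j))\<^sup>2) \<le> C * (\<Sum>j\<in>F. (cmod (x j))\<^sup>2))"

definition band_op :: "nat \<Rightarrow> zmat \<Rightarrow> bool" where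
  "band_op w A \<longleftrightarrow> bounded_op A \<and> (\<forall>i j. \<bar>i - j\<bar> > int w \<longrightarrow> A i j = 0)"

definition adj :: "zmat \<Rightarrow> zmat" where
  "adj A = (\<lambda>i j. cnj (A j i))"

text \<open>The N-column submatrix of A at offset k (band-width w): rows 1-w..N+w,
  columns 1..N; entries outside this index range are set to 0 so that equality of
  submatrices is equality of the matrices on their index range.\<close>
definition submat :: "nat \<Rightarrow> zmat \<Rightarrow> nat \<Rightarrow> int \<Rightarrow> nat \<times> (int \<Rightarrow> int \<Rightarrow> complex)" where
  "submat w A N k = (N, (\<lambda>i j. if i \<in> {1 - int w .. int N + int w} \<and> j \<in> {1 .. int N}
                                 then A (k + i) (k + j) else 0))"

definition Csub :: "nat \<Rightarrow> zmat \<Rightarrow> int set \<Rightarrow> (nat \<times> (int \<Rightarrow> int \<Rightarrow> complex)) set" where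
  "Csub w A J = {submat w A N k | N k. N \<ge> 1 \<and> {k + 1 .. k + int N} \<subseteq> J}"

definition self_contained :: "nat \<Rightarrow> zmat \<Rightarrow> bool" where
  "self_contained w A \<longleftrightarrow>
     (\<forall>C\<in>Csub w A UNIV. infinite {k::int. submat w A (fst C) k = C})"

end

theory Submission
  imports Defs "HOL-Library.Infinite_Set"
begin

text \<open>Everything here is combinatorics of windows. If the window of width N + 2L around position m reappears with all its columns in
  a half-line, its middle part reproduces the window of width N at m, at distance at
  least L from the end of that half-line. So if every window occurs inside one of the two
  half-lines, every window recurs arbitrarily far out, which is (d) and hence (a); if every
  window occurs inside the right half-line, it recurs arbitrarily far to the right, which
  is (c). For (b), a window of A* is the conjugate transpose of part of the window of A
  that is 2w columns wider.\<close>

lemma fst_submat [simp]: "fst (submat w A N k) = N"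
  by (simp add: submat_def)

lemma submat_eq_iff:
  "submat w A N a = submat w A N b \<longleftrightarrow>
     (\<forall>i\<in>{1 - int w .. int N + int w}. \<forall>j\<in>{1 .. int N}. A (a + i) (a + j) = A (b + i) (b + j))"
  by (auto simp: submat_def fun_eq_iff)

lemma submat_eq_subwindow:
  assumes "submat w A M a = submat w A M b" and "L + N \<le> M"
  shows "submat w A N (a + int L) = submat w A N (b + int L)"
proof -
  have "A (a + int L + i) (a + int L + j) = A (b + int L + i) (b + int L + j)"
    if "i \<in> {1 - int w .. int N + int w}" "j \<in> {1 .. int N}" for i j
  proof -
    have "i + int L \<in> {1 - int w .. int M + int w}" "j + int L \<in> {1 .. int M}"
      using that assms(2) by auto
    then have "A (a + (i + int L)) (a + (j + int L)) = A (b + (i + int L)) (b + (j + int L))"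
      using assms(1) unfolding submat_eq_iff by blast
    then show ?thesis
      by (simp add: ac_simps)
  qed
  then show ?thesis
    unfolding submat_eq_iff by blast
qed

lemma submat_adj_eq:
  assumes "submat w A (N + 2 * w) a = submat w A (N + 2 * w) b"
  shows "submat w (adj A) N (a + int w) = submat w (adj A) N (b + int w)"
proof -
  have "A (a + int w + j) (a + int w + i) = A (b + int w + j) (b + int w + i)"
    if "i \<in> {1 - int w .. int N + int w}" "j \<in> {1 .. int N}" for i j
  proof -
    have "j + int w \<in> {1 - int w .. int (N + 2 * w) + int w}" "i + int w \<in> {1 .. int (N + 2 * w)}"
      using that by auto
    then have "A (a + (j + int w)) (a + (i + int w)) = A (b + (j + int w)) (b + (i + int w))"
      using assms unfolding submat_eq_iff by blast
    then show ?thesis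
      by (simp add: ac_simps)
  qed
  then show ?thesis
    unfolding submat_eq_iff adj_def by simp
qed

lemma Csub_UNIV: "Csub w A UNIV = {submat w A N k | N k. N \<ge> 1}"
  by (simp add: Csub_def)

lemma submat_in_Csub: "N \<ge> 1 \<Longrightarrow> {k + 1 .. k + int N} \<subseteq> J \<Longrightarrow> submat w A N k \<in> Csub w A J"
  unfolding Csub_def by blast

lemma submat_in_Csub_UNIV: "N \<ge> 1 \<Longrightarrow> submat w A N k \<in> Csub w A UNIV"
  by (simp add: submat_in_Csub)

lemma Csub_mono: "J \<subseteq> K \<Longrightarrow> Csub w A J \<subseteq> Csub w A K"
  unfolding Csub_def by blast

lemma Csub_padded_window_copy:
  assumes "submat w A (N + 2 * L) (m - int L) \<in> Csub w A J"
  obtains k where "{k + 1 .. k + int (N + 2 * L)} \<subseteq> J"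
    and "submat w A N (k + int L) = submat w A N m"
proof -
  obtain N' k where copy: "submat w A (N + 2 * L) (m - int L) = submat w A N' k"
    and cols: "{k + 1 .. k + int N'} \<subseteq> J"
    using assms unfolding Csub_def by blast
  have "N' = N + 2 * L"
    using arg_cong[OF copy, of fst] by simp
  with copy cols have copy: "submat w A (N + 2 * L) (m - int L) = submat w A (N + 2 * L) k"
    and cols: "{k + 1 .. k + int (N + 2 * L)} \<subseteq> J"
    by simp_all
  have "submat w A N (m - int L + int L) = submat w A N (k + int L)"
    using submat_eq_subwindow[OF copy, of L N] by simp
  with cols show thesis
    using that by simp
qed

lemma submat_recurs_beyond:
  assumes "Csub w A UNIV \<subseteq> Csub w A {1..}" and "N \<ge> 1"
  obtains p where "p \<ge> K" and "submat w A N p = submat w A N m"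
proof -
  define L where "L = nat \<bar>K\<bar>"
  have "submat w A (N + 2 * L) (m - int L) \<in> Csub w A {1..}"
    using assms submat_in_Csub_UNIV[of "N + 2 * L"] by auto
  then obtain k where cols: "{k + 1 .. k + int (N + 2 * L)} \<subseteq> {1..}"
    and copy: "submat w A N (k + int L) = submat w A N m"
    by (rule Csub_padded_window_copy)
  have "k + 1 \<in> {k + 1 .. k + int (N + 2 * L)}"
    using assms(2) by simp
  with cols have "k + int L \<ge> K"
    unfolding L_def by auto
  with copy show thesis
    using that by blast
qed

lemma Csub_UNIV_eq_halfline:
  assumes "Csub w A UNIV = Csub w A {1..}"
  shows "Csub w A UNIV = Csub w A {k..}"
proof
  show "Csub w A UNIV \<subseteq> Csub w A {k..}"
  proof
    fix C assume "C \<in> Csub w A UNIV"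
    then obtain N m where "C = submat w A N m" and "N \<ge> 1"
      by (auto simp: Csub_UNIV)
    then obtain p where "p \<ge> k" and "submat w A N p = C"
      using assms submat_recurs_beyond[of w A N k m] by auto
    then show "C \<in> Csub w A {k..}"
      using submat_in_Csub[OF \<open>N \<ge> 1\<close>, of p "{k..}" w A] by auto
  qed
qed (rule Csub_mono, simp)

lemma Csub_adj_UNIV_eq_halfline:
  assumes "Csub w A UNIV = Csub w A {1..}"
  shows "Csub w (adj A) UNIV = Csub w (adj A) {1..}"
proof
  show "Csub w (adj A) UNIV \<subseteq> Csub w (adj A) {1..}"
  proof
    fix C assume "C \<in> Csub w (adj A) UNIV"
    then obtain N m where C: "C = submat w (adj A) N m" and "N \<ge> 1"
      by (auto simp: Csub_UNIV)
    then obtain p where "p \<ge> 0"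
      and "submat w A (N + 2 * w) p = submat w A (N + 2 * w) (m - int w)"
      using assms submat_recurs_beyond[of w A "N + 2 * w" 0 "m - int w"] by auto
    then have "submat w (adj A) N (p + int w) = C"
      using submat_adj_eq C by fastforce
    moreover have "{p + int w + 1 .. p + int w + int N} \<subseteq> {1..}"
      using \<open>p \<ge> 0\<close> by auto
    ultimately show "C \<in> Csub w (adj A) {1..}"
      using submat_in_Csub[OF \<open>N \<ge> 1\<close>] by blast
  qed
qed (rule Csub_mono, simp)

lemma self_contained_iff_recurs:
  "self_contained w A \<longleftrightarrow>
     (\<forall>N \<ge> 1. \<forall>m M. \<exists>p. \<bar>p\<bar> \<ge> M \<and> submat w A N p = submat w A N m)"
proof -
  have "self_contained w A \<longleftrightarrow>
      (\<forall>N m. N \<ge> 1 \<longrightarrow> infinite {p. submat w A (fst (submat w A N m)) p = submat w A N m})"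
    unfolding self_contained_def Csub_UNIV by blast
  then show ?thesis
    by (simp add: infinite_int_iff_unbounded_le)
qed

lemma self_contained_iff_Csub_halflines:
  "self_contained w A \<longleftrightarrow> Csub w A UNIV = Csub w A {1..} \<union> Csub w A {..-1}"
proof
  assume sc: "self_contained w A"
  show "Csub w A UNIV = Csub w A {1..} \<union> Csub w A {..-1}"
  proof
    show "Csub w A UNIV \<subseteq> Csub w A {1..} \<union> Csub w A {..-1}"
    proof
      fix C assume "C \<in> Csub w A UNIV"
      then obtain N m where "C = submat w A N m" and "N \<ge> 1"
        by (auto simp: Csub_UNIV)
      then obtain p where far: "\<bar>p\<bar> \<ge> int N + 1" and "submat w A N p = C"
        using sc unfolding self_contained_iff_recurs by blast
      from far consider "{p + 1 .. p + int N} \<subseteq> {1..}" | "{p + 1 .. p + int N} \<subseteq> {..-1}"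
        by (cases "p \<ge> 0") auto
      then show "C \<in> Csub w A {1..} \<union> Csub w A {..-1}"
        using submat_in_Csub[OF \<open>N \<ge> 1\<close>] \<open>submat w A N p = C\<close> by cases blast+
    qed
  qed (intro Un_least Csub_mono; simp)
next
  assume halflines: "Csub w A UNIV = Csub w A {1..} \<union> Csub w A {..-1}"
  show "self_contained w A"
    unfolding self_contained_iff_recurs
  proof (intro allI impI)
    fix N :: nat and m M :: int
    assume "N \<ge> 1"
    define L where "L = nat M"
    have "submat w A (N + 2 * L) (m - int L) \<in> Csub w A {1..} \<union> Csub w A {..-1}"
      using \<open>N \<ge> 1\<close> halflines submat_in_Csub_UNIV[of "N + 2 * L"] by auto
    then obtain k J where "J = {1..} \<or> J = {..-1}"
      and "{k + 1 .. k + int (N + 2 * L)} \<subseteq> J"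
      and copy: "submat w A N (k + int L) = submat w A N m"
      by (metis Csub_padded_window_copy Un_iff)
    moreover have "k + 1 \<in> {k + 1 .. k + int (N + 2 * L)}"
      and "k + int (N + 2 * L) \<in> {k + 1 .. k + int (N + 2 * L)}"
      using \<open>N \<ge> 1\<close> by auto
    ultimately have "\<bar>k + int L\<bar> \<ge> M"
      unfolding L_def by auto
    with copy show "\<exists>p. \<bar>p\<bar> \<ge> M \<and> submat w A N p = submat w A N m"
      by blast
  qed
qed

theorem lemma4p4:
  fixes A :: zmat and w :: nat
  assumes "band_op w A"
    and "Csub w A UNIV = Csub w A {1..}"
  shows "self_contained w A
    \<and> Csub w (adj A) UNIV = Csub w (adj A) {1..}
    \<and> (\<forall>k::int. Csub w A UNIV = Csub w A {k..})
    \<and> (\<forall>(B::zmat) (v::nat). band_op v B \<longrightarrow>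
          (self_contained v B \<longleftrightarrow> Csub v B UNIV = Csub v B {1..} \<union> Csub v B {..-1}))"
proof (intro conjI allI impI)
  have "Csub w A UNIV = Csub w A {1..} \<union> Csub w A {..-1}"
    using assms(2) Csub_mono[of "{..-1}" UNIV w A] by auto
  then show "self_contained w A"
    by (simp add: self_contained_iff_Csub_halflines)
  show "Csub w (adj A) UNIV = Csub w (adj A) {1..}"
    using assms(2) by (rule Csub_adj_UNIV_eq_halfline)
  show "Csub w A UNIV = Csub w A {k..}" for k
    using assms(2) by (rule Csub_UNIV_eq_halfline)
  show "self_contained v B \<longleftrightarrow> Csub v B UNIV = Csub v B {1..} \<union> Csub v B {..-1}" for B v
    by (rule self_contained_iff_Csub_halflines)
qed

end
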